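(* Let $G$ be a connected threshold graph of order $n\ge 4$ and size $m$ with $n-1<m<\binom{n}{2}$, with $c$ type 1 vertices, forward one position sequence $(f_1,\ldots,f_c)$ and numbers $F_p$ as in the context. Let $\Phi\in\mathbb{R}^{c\times c}$ be given by $\Phi_{ij}=f_{\min\{i,j\}}$ and let $\mathbf{1}\in\mathbb{R}^{c}$ be the all-ones vector. Then $F_p=\mathbf{1}^\intercal\Phi^p\mathbf{1}$ for every $p\in\mathbb{N}_0$.
   Context: A threshold graph is a simple graph whose vertices can be ordered $v_1,\ldots,v_n$ so that for each $2\le i\le n$, $v_i$ is either adjacent to all of $v_1,\ldots,v_{i-1}$ (then $a_i=1$) or to none of them (then $a_i=0$); by convention $a_1=1$. Vertex $v_i$ is of type 1 if $a_i=1$ and of type 0 if $a_i=0$; $c$ and $z$ are the numbers of type 1 and type 0 vertices. The backwards zero position sequence $(b_1,\ldots,b_z)$: $b_i$ is the number of type 1 vertices appearing after the $i$-th type 0 vertex in the order $v_1,\ldots,v_n$. The forward one position sequence $(f_1,\ldots,f_c)$: $f_i$ is the number of type 0 vertices appearing before the $i$-th type 1 vertex in the order $v_1,\ldots,v_n$. Define $F_0=c$ and for $p\ge1$, $F_p=\sum_{i_1,\ldots,i_p=1}^{z} b_{i_1}\min\{b_{i_1},b_{i_2}\}\cdots\min\{b_{i_{p-1}},b_{i_p}\}\,b_{i_p}$ (with $F_1=\sum_i b_i^2$); $F_p$ equals the number of lazy walks in $G$ whose type sequence is $1\,0^{s_1}\,1\cdots1\,0^{s_p}\,1$ for any fixed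 $s_1,\ldots,s_p\ge1$. *)

theory Defs
  imports Main "Jordan_Normal_Form.Matrix"
begin

definition simple_graph :: "'a set \<Rightarrow> ('a \<Rightarrow> 'a \<Rightarrow> bool) \<Rightarrow> bool" where
  "simple_graph V E \<longleftrightarrow> finite V \<and> (\<forall>x y. E x y \<longrightarrow> x \<in> V \<and> y \<in> V \<and> x \<noteq> y \<and> E y x)"

definition graph_connected :: "'a set \<Rightarrow> ('a \<Rightarrow> 'a \<Rightarrow> bool) \<Rightarrow> bool" where
  "graph_connected V E \<longleftrightarrow> (\<forall>x\<in>V. \<forall>y\<in>V. (x, y) \<in> {(u, w). E u w}\<^sup>*)"

definition graph_size :: "('a \<Rightarrow> 'a \<Rightarrow> bool) \<Rightarrow> nat" where
  "graph_size E = card {{x, y} | x y. E x y}"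

text \<open>vs = [v_1,...,v_n] (0-indexed) is a threshold ordering of the graph with
  type sequence a (a ! i = True means type 1), with the convention a_1 = 1.\<close>
definition threshold_ordering ::
  "'a set \<Rightarrow> ('a \<Rightarrow> 'a \<Rightarrow> bool) \<Rightarrow> 'a list \<Rightarrow> bool list \<Rightarrow> bool" where
  "threshold_ordering V E vs a \<longleftrightarrow>
     distinct vs \<and> set vs = V \<and> length a = length vs \<and> vs \<noteq> [] \<and> a ! 0 \<and>
     (\<forall>i < length vs. \<forall>j < i. (E (vs ! j) (vs ! i) \<longleftrightarrow> a ! i))"

definition num_c :: "bool list \<Rightarrow> nat" where
  "num_c a = length (filter id a)"

definition num_z :: "bool list \<Rightarrow> nat" where
  "num_z a = length (filter Not a)"

definition bzp :: "bool list \<Rightarrow> nat list" where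
  "bzp a = [length (filter id (drop (Suc k) a)). k \<leftarrow> [0..<length a], \<not> a ! k]"

definition fop :: "bool list \<Rightarrow> nat list" where
  "fop a = [length (filter Not (take k a)). k \<leftarrow> [0..<length a], a ! k]"

text \<open>F_0 = c; for p \<ge> 1, sum over index tuples (i_1..i_p) in {1..z}^p (here lists of length p
  with entries < z) of b_{i_1} min(b_{i_1},b_{i_2}) ... min(b_{i_(p-1)},b_{i_p}) b_{i_p}.\<close>
definition Fnum :: "bool list \<Rightarrow> nat \<Rightarrow> nat" where
  "Fnum a p = (if p = 0 then num_c a else
     (let b = bzp a in
      \<Sum>is \<in> {is. length is = p \<and> set is \<subseteq> {..<num_z a}}.
        b ! (is ! 0) * (\<Prod>k<p - 1. min (b ! (is ! k)) (b ! (is ! Suc k))) * b ! (is ! (p - 1))))"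

definition Phi_mat :: "bool list \<Rightarrow> real mat" where
  "Phi_mat a = mat (num_c a) (num_c a) (\<lambda>(i, j). real (fop a ! min i j))"

definition ones_vec :: "nat \<Rightarrow> real vec" where
  "ones_vec c = vec c (\<lambda>_. 1)"

end

theory Submission
  imports Defs
begin

(* Let N be the z x c 0/1 matrix with N t i = 1 iff the t-th type 0 vertex precedes the i-th
   type 1 vertex. Then (N^T N) i j counts the type 0 vertices before both the i-th and the j-th
   type 1 vertex, i.e. f_(min i j), so Phi = N^T N. Dually N 1 = b, and N N^T = (min b_s b_t)
   because the sets of type 1 vertices following two type 0 vertices are nested.
   Hence 1^T Phi^(p+1) 1 = b^T (N N^T)^p b, and expanding this bilinear form as a sum over index
   tuples gives exactly F_(p+1). *)

lemma concat_map_if_singleton: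
  "concat (map (\<lambda>x. if P x then [f x] else []) xs) = map f (filter P xs)"
  by (induction xs) auto

definition positions :: "('a \<Rightarrow> bool) \<Rightarrow> 'a list \<Rightarrow> nat list" where
  "positions P xs = filter (\<lambda>k. P (xs ! k)) [0..<length xs]"

lemma distinct_positions: "distinct (positions P xs)"
  unfolding positions_def by simp

lemma sorted_positions: "sorted (positions P xs)"
  unfolding positions_def by (simp add: sorted_wrt_filter)

lemma length_filter_positions:
  "length (filter Q (positions P xs)) = card {k. k < length xs \<and> P (xs ! k) \<and> Q k}"
proof -
  have "length (filter Q (positions P xs)) = card (set (filter Q (positions P xs)))"
    using distinct_card[of "filter Q (positions P xs)"] by (simp add: distinct_positions)
  also have "set (filter Q (positions P xs)) = {k. k < length xs \<and> P (xs ! k) \<and> Q k}"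
    by (auto simp: positions_def)
  finally show ?thesis .
qed

lemma length_positions: "length (positions P xs) = length (filter P xs)"
  using length_filter_positions[of "\<lambda>_. True" P xs] by (simp add: length_filter_conv_card)

lemma length_filter_take:
  "length (filter P (take k xs)) = length (filter (\<lambda>j. j < k) (positions P xs))"
proof -
  have "length (filter P (take k xs)) = card {j. j < length xs \<and> P (xs ! j) \<and> j < k}"
    unfolding length_filter_conv_card by (intro arg_cong[where f = card]) auto
  then show ?thesis by (simp only: length_filter_positions)
qed

lemma length_filter_drop:
  "length (filter P (drop k xs)) = length (filter (\<lambda>j. k \<le> j) (positions P xs))"
proof -
  have "length (filter P (take k xs)) + length (filter P (drop k xs)) = length (filter P xs)"
    by (metis append_take_drop_id filter_append length_append)
  moreover have "length (filter (\<lambda>j. j < k) (positions P xs))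
      + length (filter (\<lambda>j. k \<le> j) (positions P xs)) = length (filter P xs)"
    using sum_length_filter_compl[of "\<lambda>j. j < k" "positions P xs"] by (simp add: not_less length_positions)
  ultimately show ?thesis by (simp add: length_filter_take)
qed

lemma length_filter_less_both:
  fixes x y :: "'a :: linorder"
  shows "length (filter (\<lambda>z. x < z \<and> y < z) zs)
    = min (length (filter (\<lambda>z. x < z) zs)) (length (filter (\<lambda>z. y < z) zs))"
proof -
  have antimono: "length (filter (\<lambda>z. v < z) zs) \<le> length (filter (\<lambda>z. u < z) zs)"
    if "u \<le> v" for u v :: 'a
    using that by (induction zs) auto
  show ?thesis
  proof (cases "x \<le> y")
    case True
    then have "filter (\<lambda>z. x < z \<and> y < z) zs = filter (\<lambda>z. y < z) zs"
      by (intro filter_cong) auto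
    then show ?thesis using antimono[OF True] by simp
  next
    case False
    then have "filter (\<lambda>z. x < z \<and> y < z) zs = filter (\<lambda>z. x < z) zs"
      by (intro filter_cong) auto
    then show ?thesis using antimono[of y x] False by simp
  qed
qed

definition precedence_mat :: "nat list \<Rightarrow> nat list \<Rightarrow> real mat" where
  "precedence_mat xs ys = mat (length xs) (length ys) (\<lambda>(t, i). of_bool (xs ! t < ys ! i))"

lemma precedence_mat_carrier: "precedence_mat xs ys \<in> carrier_mat (length xs) (length ys)"
  by (simp add: precedence_mat_def)

lemma sum_of_bool_nth: "(\<Sum>i<length xs. of_bool (P (xs ! i))) = real (length (filter P xs))"
  by (simp add: length_filter_conv_card Int_def)

lemma precedence_mat_mult_ones_vec:
  "precedence_mat xs ys *\<^sub>v ones_vec (length ys)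
    = vec (length xs) (\<lambda>t. real (length (filter (\<lambda>y. xs ! t < y) ys)))"
  (is "?L = ?R")
proof (rule eq_vecI)
  fix t assume t: "t < dim_vec ?R"
  then have "?L $ t = (\<Sum>i<length ys. of_bool ((\<lambda>y. xs ! t < y) (ys ! i)))"
    by (simp add: precedence_mat_def ones_vec_def scalar_prod_def atLeast0LessThan)
  also have "\<dots> = real (length (filter (\<lambda>y. xs ! t < y) ys))"
    by (rule sum_of_bool_nth)
  finally show "?L $ t = ?R $ t"
    using t by simp
qed (simp add: precedence_mat_def)

lemma precedence_mat_mult_transpose:
  "precedence_mat xs ys * (precedence_mat xs ys)\<^sup>T = mat (length xs) (length xs)
    (\<lambda>(s, t). real (min (length (filter (\<lambda>y. xs ! s < y) ys)) (length (filter (\<lambda>y. xs ! t < y) ys))))"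
  (is "?L = ?R")
proof (rule eq_matI)
  fix s t assume st: "s < dim_row ?R" "t < dim_col ?R"
  then have "?L $$ (s, t) = (\<Sum>i<length ys. of_bool ((\<lambda>y. xs ! s < y \<and> xs ! t < y) (ys ! i)))"
    by (simp add: precedence_mat_def scalar_prod_def atLeast0LessThan of_bool_conj)
  also have "\<dots> = real (length (filter (\<lambda>y. xs ! s < y \<and> xs ! t < y) ys))"
    by (rule sum_of_bool_nth)
  finally show "?L $$ (s, t) = ?R $$ (s, t)"
    using st by (simp add: length_filter_less_both)
qed (simp_all add: precedence_mat_def)

lemma transpose_precedence_mat_mult:
  assumes "sorted ys"
  shows "(precedence_mat xs ys)\<^sup>T * precedence_mat xs ys
    = mat (length ys) (length ys) (\<lambda>(i, j). real (length (filter (\<lambda>x. x < ys ! min i j) xs)))"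
  (is "?L = ?R")
proof (rule eq_matI)
  fix i j assume ij: "i < dim_row ?R" "j < dim_col ?R"
  then have "?L $$ (i, j) = (\<Sum>t<length xs. of_bool ((\<lambda>x. x < ys ! i \<and> x < ys ! j) (xs ! t)))"
    by (simp add: precedence_mat_def scalar_prod_def atLeast0LessThan of_bool_conj)
  also have "\<dots> = real (length (filter (\<lambda>x. x < ys ! i \<and> x < ys ! j) xs))"
    by (rule sum_of_bool_nth)
  also have "(\<lambda>x. x < ys ! i \<and> x < ys ! j) = (\<lambda>x. x < ys ! min i j)"
    using ij sorted_nth_mono[OF assms, of i j] sorted_nth_mono[OF assms, of j i]
    by (auto simp: min_def fun_eq_iff)
  finally show "?L $$ (i, j) = ?R $$ (i, j)"
    using ij by simp
qed (simp_all add: precedence_mat_def)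

lemma pow_mat_Suc_left:
  assumes "A \<in> carrier_mat n n"
  shows "A ^\<^sub>m Suc k = A * A ^\<^sub>m k"
proof (induction k)
  case 0
  show ?case using assms by simp
next
  case (Suc k)
  have "A ^\<^sub>m Suc (Suc k) = (A * A ^\<^sub>m k) * A"
    using Suc by simp
  also have "\<dots> = A * A ^\<^sub>m Suc k"
    using assms by (simp add: assoc_mult_mat[of A n n "A ^\<^sub>m k" n A n])
  finally show ?case .
qed

lemma pow_mat_mult_Suc:
  assumes A: "A \<in> carrier_mat m n" and B: "B \<in> carrier_mat n m"
  shows "(A * B) ^\<^sub>m Suc k = A * (B * A) ^\<^sub>m k * B"
proof (induction k)
  case 0
  show ?case using A B by simp
next
  case (Suc k)
  have AB: "A * B \<in> carrier_mat m m" and BA: "B * A \<in> carrier_mat n n"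
    using A B by simp_all
  then have P: "(B * A) ^\<^sub>m k \<in> carrier_mat n n"
    by simp
  then have AP: "A * (B * A) ^\<^sub>m k \<in> carrier_mat m n"
    using A by simp
  have "(A * B) ^\<^sub>m Suc (Suc k) = A * (B * A) ^\<^sub>m k * B * (A * B)"
    using Suc by simp
  also have "\<dots> = A * (B * A) ^\<^sub>m k * (B * (A * B))"
    by (rule assoc_mult_mat[OF AP B AB])
  also have "B * (A * B) = B * A * B"
    by (rule assoc_mult_mat[OF B A B, symmetric])
  also have "A * (B * A) ^\<^sub>m k * (B * A * B) = A * (B * A) ^\<^sub>m k * (B * A) * B"
    by (rule assoc_mult_mat[OF AP BA B, symmetric])
  also have "A * (B * A) ^\<^sub>m k * (B * A) = A * (B * A) ^\<^sub>m Suc k"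
    by (simp add: assoc_mult_mat[OF A P BA])
  finally show ?case .
qed

lemma scalar_prod_transpose_mult_pow:
  fixes A :: "'a :: comm_semiring_1 mat"
  assumes A: "A \<in> carrier_mat n m" and u: "u \<in> carrier_vec m"
  shows "u \<bullet> ((A\<^sup>T * A) ^\<^sub>m Suc k *\<^sub>v u) = (A *\<^sub>v u) \<bullet> ((A * A\<^sup>T) ^\<^sub>m k *\<^sub>v (A *\<^sub>v u))"
proof -
  define P where "P = (A * A\<^sup>T) ^\<^sub>m k"
  have At: "A\<^sup>T \<in> carrier_mat m n" and P: "P \<in> carrier_mat n n"
    using A by (simp_all add: P_def)
  have Au: "A *\<^sub>v u \<in> carrier_vec n" and w: "P *\<^sub>v (A *\<^sub>v u) \<in> carrier_vec n"
    using A u P by simp_all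
  have "(A\<^sup>T * A) ^\<^sub>m Suc k *\<^sub>v u = A\<^sup>T * P * A *\<^sub>v u"
    unfolding P_def by (rule arg_cong[OF pow_mat_mult_Suc[OF At A]])
  also have "\<dots> = A\<^sup>T *\<^sub>v (P *\<^sub>v (A *\<^sub>v u))"
    using assoc_mult_mat_vec[OF mult_carrier_mat[OF At P] A u] assoc_mult_mat_vec[OF At P Au]
    by (simp only:)
  finally have "u \<bullet> ((A\<^sup>T * A) ^\<^sub>m Suc k *\<^sub>v u) = (A\<^sup>T *\<^sub>v (P *\<^sub>v (A *\<^sub>v u))) \<bullet> u"
    using At u w by (simp add: comm_scalar_prod[of u m])
  also have "\<dots> = (P *\<^sub>v (A *\<^sub>v u)) \<bullet> (A *\<^sub>v u)"
    by (rule transpose_vec_mult_scalar[OF A u w])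
  also have "\<dots> = (A *\<^sub>v u) \<bullet> (P *\<^sub>v (A *\<^sub>v u))"
    by (rule comm_scalar_prod[OF w Au])
  finally show ?thesis unfolding P_def .
qed

lemma scalar_prod_pow_mat_Suc_mult_vec:
  fixes A :: "'a :: comm_semiring_1 mat"
  assumes A: "A \<in> carrier_mat n n" and u: "u \<in> carrier_vec n" and v: "v \<in> carrier_vec n"
  shows "u \<bullet> (A ^\<^sub>m Suc p *\<^sub>v v) = (A\<^sup>T *\<^sub>v u) \<bullet> (A ^\<^sub>m p *\<^sub>v v)"
proof -
  have w: "A ^\<^sub>m p *\<^sub>v v \<in> carrier_vec n"
    by (rule mult_mat_vec_carrier[OF pow_carrier_mat[OF A] v])
  have "A ^\<^sub>m Suc p *\<^sub>v v = A *\<^sub>v (A ^\<^sub>m p *\<^sub>v v)"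
    unfolding pow_mat_Suc_left[OF A] by (rule assoc_mult_mat_vec[OF A pow_carrier_mat[OF A] v])
  then show ?thesis
    using transpose_vec_mult_scalar[OF A w u] by simp
qed

lemma index_transpose_mult_mat_vec:
  fixes A :: "'a :: comm_semiring_1 mat"
  assumes "A \<in> carrier_mat n m" and "u \<in> carrier_vec n" and "j < m"
  shows "(A\<^sup>T *\<^sub>v u) $ j = (\<Sum>i<n. u $ i * A $$ (i, j))"
  using assms by (simp add: scalar_prod_def atLeast0LessThan mult.commute)

lemma sum_lists_length_Suc:
  assumes "finite A"
  shows "(\<Sum>xs | length xs = Suc l \<and> set xs \<subseteq> A. g xs)
    = (\<Sum>x\<in>A. \<Sum>xs | length xs = l \<and> set xs \<subseteq> A. g (x # xs))"
proof -
  have "(\<Sum>xs | length xs = Suc l \<and> set xs \<subseteq> A. g xs)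
      = (\<Sum>(xs, x) \<in> {xs. length xs = l \<and> set xs \<subseteq> A} \<times> A. g (x # xs))"
    by (simp add: conj_commute lists_length_Suc_eq sum.reindex inj_on_def case_prod_beta)
  also have "\<dots> = (\<Sum>x\<in>A. \<Sum>xs | length xs = l \<and> set xs \<subseteq> A. g (x # xs))"
    by (simp add: sum.cartesian_product[symmetric] sum.swap[of _ A])
  finally show ?thesis .
qed

lemma scalar_prod_pow_mat_mult_vec:
  fixes A :: "'a :: comm_semiring_1 mat"
  assumes A: "A \<in> carrier_mat n n" and u: "u \<in> carrier_vec n" and v: "v \<in> carrier_vec n"
  shows "u \<bullet> (A ^\<^sub>m p *\<^sub>v v) = (\<Sum>ks | length ks = Suc p \<and> set ks \<subseteq> {..<n}.
    u $ (ks ! 0) * (\<Prod>k<p. A $$ (ks ! k, ks ! Suc k)) * v $ (ks ! p))"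
  using u
proof (induction p arbitrary: u)
  case 0
  have "u \<bullet> (A ^\<^sub>m 0 *\<^sub>v v) = (\<Sum>i<n. u $ i * v $ i)"
    using A v by (simp add: scalar_prod_def atLeast0LessThan)
  moreover have "{ks. length ks = 0 \<and> set ks \<subseteq> {..<n}} = {[]}"
    by auto
  ultimately show ?case
    by (simp only: sum_lists_length_Suc[OF finite_lessThan]) simp
next
  case (Suc p)
  have "u \<bullet> (A ^\<^sub>m Suc p *\<^sub>v v) = (A\<^sup>T *\<^sub>v u) \<bullet> (A ^\<^sub>m p *\<^sub>v v)"
    by (rule scalar_prod_pow_mat_Suc_mult_vec[OF A Suc.prems v])
  also have "\<dots> = (\<Sum>ks | length ks = Suc p \<and> set ks \<subseteq> {..<n}.
      (A\<^sup>T *\<^sub>v u) $ (ks ! 0) * (\<Prod>k<p. A $$ (ks ! k, ks ! Suc k)) * v $ (ks ! p))"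
    using A Suc.prems by (intro Suc.IH) simp
  also have "\<dots> = (\<Sum>ks | length ks = Suc p \<and> set ks \<subseteq> {..<n}.
      (\<Sum>i<n. u $ i * A $$ (i, ks ! 0)) * (\<Prod>k<p. A $$ (ks ! k, ks ! Suc k)) * v $ (ks ! p))"
    by (rule sum.cong) (auto simp: index_transpose_mult_mat_vec[OF A Suc.prems] length_Suc_conv)
  also have "\<dots> = (\<Sum>ks | length ks = Suc p \<and> set ks \<subseteq> {..<n}. \<Sum>i<n.
      u $ i * (A $$ (i, ks ! 0) * (\<Prod>k<p. A $$ (ks ! k, ks ! Suc k))) * v $ (ks ! p))"
    by (simp add: sum_distrib_right mult.assoc)
  also have "\<dots> = (\<Sum>i<n. \<Sum>ks | length ks = Suc p \<and> set ks \<subseteq> {..<n}.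
      u $ i * (A $$ (i, ks ! 0) * (\<Prod>k<p. A $$ (ks ! k, ks ! Suc k))) * v $ (ks ! p))"
    by (rule sum.swap)
  also have "\<dots> = (\<Sum>ks | length ks = Suc (Suc p) \<and> set ks \<subseteq> {..<n}.
      u $ (ks ! 0) * (\<Prod>k<Suc p. A $$ (ks ! k, ks ! Suc k)) * v $ (ks ! Suc p))"
    by (simp only: sum_lists_length_Suc[OF finite_lessThan] prod.lessThan_Suc_shift nth_Cons_0 nth_Cons_Suc)
  finally show ?case .
qed

lemma fop_eq_positions:
  "fop a = map (\<lambda>k. length (filter (\<lambda>j. j < k) (positions Not a))) (positions id a)"
proof -
  have "fop a = map (\<lambda>k. length (filter Not (take k a))) (positions id a)"
    unfolding fop_def positions_def by (simp add: concat_map_if_singleton)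
  then show ?thesis by (simp add: length_filter_take)
qed

lemma bzp_eq_positions:
  "bzp a = map (\<lambda>k. length (filter (\<lambda>j. k < j) (positions id a))) (positions Not a)"
proof -
  have "bzp a = map (\<lambda>k. length (filter id (drop (Suc k) a))) (positions Not a)"
    unfolding bzp_def positions_def by (simp add: concat_map_if_singleton)
  then show ?thesis by (simp add: length_filter_drop Suc_le_eq)
qed

definition min_mat :: "nat list \<Rightarrow> real mat" where
  "min_mat b = mat (length b) (length b) (\<lambda>(s, t). real (min (b ! s) (b ! t)))"

definition of_nat_vec :: "nat list \<Rightarrow> real vec" where
  "of_nat_vec b = vec (length b) (\<lambda>t. real (b ! t))"

lemma num_c_eq_length_positions: "num_c a = length (positions id a)"
  by (simp add: num_c_def length_positions)

lemma length_bzp: "length (bzp a) = num_z a"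
  by (simp add: bzp_eq_positions num_z_def length_positions)

definition type_precedence_mat :: "bool list \<Rightarrow> real mat" where
  "type_precedence_mat a = precedence_mat (positions Not a) (positions id a)"

lemma type_precedence_mat_carrier: "type_precedence_mat a \<in> carrier_mat (num_z a) (num_c a)"
  using precedence_mat_carrier[of "positions Not a" "positions id a"]
  by (simp add: type_precedence_mat_def num_c_def num_z_def length_positions)

lemma Phi_mat_eq_transpose_mult: "Phi_mat a = (type_precedence_mat a)\<^sup>T * type_precedence_mat a"
  unfolding Phi_mat_def type_precedence_mat_def transpose_precedence_mat_mult[OF sorted_positions]
    num_c_eq_length_positions
  by (rule cong_mat) (simp_all add: fop_eq_positions)

lemma type_precedence_mat_mult_transpose:
  "type_precedence_mat a * (type_precedence_mat a)\<^sup>T = min_mat (bzp a)"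
  unfolding type_precedence_mat_def precedence_mat_mult_transpose min_mat_def
  by (rule cong_mat) (simp_all add: bzp_eq_positions)

lemma type_precedence_mat_mult_ones_vec:
  "type_precedence_mat a *\<^sub>v ones_vec (num_c a) = of_nat_vec (bzp a)"
  unfolding type_precedence_mat_def num_c_eq_length_positions precedence_mat_mult_ones_vec of_nat_vec_def
  by (rule eq_vecI) (simp_all add: bzp_eq_positions)

lemma Fnum_Suc_eq_scalar_prod:
  "real (Fnum a (Suc p)) = of_nat_vec (bzp a) \<bullet> (min_mat (bzp a) ^\<^sub>m p *\<^sub>v of_nat_vec (bzp a))"
proof -
  let ?b = "bzp a"
  have "of_nat_vec ?b \<bullet> (min_mat ?b ^\<^sub>m p *\<^sub>v of_nat_vec ?b)
      = (\<Sum>ks | length ks = Suc p \<and> set ks \<subseteq> {..<num_z a}. of_nat_vec ?b $ (ks ! 0)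
          * (\<Prod>k<p. min_mat ?b $$ (ks ! k, ks ! Suc k)) * of_nat_vec ?b $ (ks ! p))"
    using scalar_prod_pow_mat_mult_vec[of "min_mat ?b" "num_z a"]
    by (simp add: min_mat_def of_nat_vec_def length_bzp)
  also have "\<dots> = (\<Sum>ks | length ks = Suc p \<and> set ks \<subseteq> {..<num_z a}. real (?b ! (ks ! 0)
          * (\<Prod>k<p. min (?b ! (ks ! k)) (?b ! (ks ! Suc k))) * ?b ! (ks ! p)))"
  proof (rule sum.cong)
    fix ks assume "ks \<in> {ks. length ks = Suc p \<and> set ks \<subseteq> {..<num_z a}}"
    then have "\<forall>k\<le>p. ks ! k < length ?b"
      by (auto simp: length_bzp subset_iff)
    then show "of_nat_vec ?b $ (ks ! 0) * (\<Prod>k<p. min_mat ?b $$ (ks ! k, ks ! Suc k)) * of_nat_vec ?b $ (ks ! p)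
      = real (?b ! (ks ! 0) * (\<Prod>k<p. min (?b ! (ks ! k)) (?b ! (ks ! Suc k))) * ?b ! (ks ! p))"
      by (simp add: min_mat_def of_nat_vec_def)
  qed simp
  also have "\<dots> = real (Fnum a (Suc p))"
    by (simp add: Fnum_def Let_def)
  finally show ?thesis ..
qed

theorem propositionA3:
  fixes V :: "'v set" and E :: "'v \<Rightarrow> 'v \<Rightarrow> bool" and vs :: "'v list" and a :: "bool list"
  assumes "simple_graph V E"
    and "threshold_ordering V E vs a"
    and "graph_connected V E"
    and "card V \<ge> 4"
    and "card V - 1 < graph_size E"
    and "graph_size E < card V choose 2"
  shows "\<forall>p::nat. real (Fnum a p) =
           ones_vec (num_c a) \<bullet> ((Phi_mat a ^\<^sub>m p) *\<^sub>v ones_vec (num_c a))"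
proof
  \<comment> \<open>The identity depends only on the type sequence a.\<close>
  fix p :: nat
  define N where "N = type_precedence_mat a"
  define ones where "ones = ones_vec (num_c a)"
  have N: "N \<in> carrier_mat (num_z a) (num_c a)" and ones: "ones \<in> carrier_vec (num_c a)"
    by (simp_all add: N_def type_precedence_mat_carrier ones_def ones_vec_def)
  show "real (Fnum a p) = ones \<bullet> ((Phi_mat a ^\<^sub>m p) *\<^sub>v ones)"
  proof (cases p)
    case 0
    then show ?thesis
      using ones by (simp add: Fnum_def Phi_mat_def ones_def ones_vec_def scalar_prod_def)
  next
    case (Suc q)
    have "real (Fnum a p) = of_nat_vec (bzp a) \<bullet> (min_mat (bzp a) ^\<^sub>m q *\<^sub>v of_nat_vec (bzp a))"
      unfolding Suc by (rule Fnum_Suc_eq_scalar_prod)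
    also have "\<dots> = (N *\<^sub>v ones) \<bullet> ((N * N\<^sup>T) ^\<^sub>m q *\<^sub>v (N *\<^sub>v ones))"
      unfolding N_def ones_def type_precedence_mat_mult_transpose type_precedence_mat_mult_ones_vec ..
    also have "\<dots> = ones \<bullet> ((N\<^sup>T * N) ^\<^sub>m p *\<^sub>v ones)"
      unfolding Suc by (rule scalar_prod_transpose_mult_pow[OF N ones, symmetric])
    finally show ?thesis
      unfolding N_def Phi_mat_eq_transpose_mult .
  qed
qed

end
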